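(* Let $\mathbb{F}$ be an algebraically closed field with $\mathrm{char}\,\mathbb{F}=2$ and $n\ge1$. Then the algebra $T_n$ of trace ${\rm G}_2$-invariants is generated by $S_n$, and no proper subset of $S_n$ generates $T_n$.
   Context: The split octonion algebra $\mathbf{O}$ is the 8-dimensional $\mathbb{F}$-vector space of formal matrices $a=\begin{pmatrix}\alpha&\mathbf{u}\\ \mathbf{v}&\beta\end{pmatrix}$ with $\alpha,\beta\in\mathbb{F}$, $\mathbf{u},\mathbf{v}\in\mathbb{F}^3$, with multiplication $\begin{pmatrix}\alpha&\mathbf{u}\\ \mathbf{v}&\beta\end{pmatrix}\begin{pmatrix}\alpha'&\mathbf{u}'\\ \mathbf{v}'&\beta'\end{pmatrix}=\begin{pmatrix}\alpha\alpha'+\mathbf{u}\cdot\mathbf{v}'&\alpha\mathbf{u}'+\beta'\mathbf{u}-\mathbf{v}\times\mathbf{v}'\\ \alpha'\mathbf{v}+\beta\mathbf{v}'+\mathbf{u}\times\mathbf{u}'&\beta\beta'+\mathbf{v}\cdot\mathbf{u}'\end{pmatrix}$ (dot product and cross product on $\mathbb{F}^3$). Trace $\mathrm{tr}(a)=\alpha+\beta$, norm $n(a)=\alpha\beta-\mathbf{u}\cdot\mathbf{v}$. ${\rm G}_2=\mathrm{Aut}(\mathbf{O})$. $T_n$ is the subalgebra of the polynomial ring $\mathbb{F}[\mathbf{O}^n]$ generated by the functions $\underline{a}\mapsto n(a_i)$ ($1\le i\le n$) and $\underline{a}\mapsto\mathrm{tr}(w(a_1,\ldots,a_n))$ for all non-empty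 non-associative words $w$ in $n$ letters. $S_n$ is the set consisting of $\underline{a}\mapsto n(a_i)$ ($1\le i\le n$) and $\underline{a}\mapsto\mathrm{tr}((\cdots((a_{i_1}a_{i_2})a_{i_3})\cdots)a_{i_k})$ for all $k\ge 1$ and $1\le i_1<\cdots<i_k\le n$. *)

theory Defs
  imports "HOL-Computational_Algebra.Polynomial"
begin

datatype 'a vec3 = V3 'a 'a 'a

fun vadd :: "'a::field vec3 \<Rightarrow> 'a vec3 \<Rightarrow> 'a vec3" where
  "vadd (V3 x1 x2 x3) (V3 y1 y2 y3) = V3 (x1 + y1) (x2 + y2) (x3 + y3)"

fun vsub :: "'a::field vec3 \<Rightarrow> 'a vec3 \<Rightarrow> 'a vec3" where
  "vsub (V3 x1 x2 x3) (V3 y1 y2 y3) = V3 (x1 - y1) (x2 - y2) (x3 - y3)"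

fun vscale :: "'a::field \<Rightarrow> 'a vec3 \<Rightarrow> 'a vec3" where
  "vscale c (V3 x1 x2 x3) = V3 (c * x1) (c * x2) (c * x3)"

fun vdot :: "'a::field vec3 \<Rightarrow> 'a vec3 \<Rightarrow> 'a" where
  "vdot (V3 x1 x2 x3) (V3 y1 y2 y3) = x1 * y1 + x2 * y2 + x3 * y3"

fun vcross :: "'a::field vec3 \<Rightarrow> 'a vec3 \<Rightarrow> 'a vec3" where
  "vcross (V3 x1 x2 x3) (V3 y1 y2 y3) =
     V3 (x2 * y3 - x3 * y2) (x3 * y1 - x1 * y3) (x1 * y2 - x2 * y1)"

section \<open>Split octonions (Zorn vector matrices)\<close>

text \<open>Oct alpha u v beta stands for the formal matrix with rows (alpha, u) and (v, beta).\<close>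

datatype 'a oct = Oct 'a "'a vec3" "'a vec3" 'a

fun omult :: "'a::field oct \<Rightarrow> 'a oct \<Rightarrow> 'a oct" where
  "omult (Oct al u v be) (Oct al' u' v' be') =
     Oct (al * al' + vdot u v')
         (vsub (vadd (vscale al u') (vscale be' u)) (vcross v v'))
         (vadd (vadd (vscale al' v) (vscale be v')) (vcross u u'))
         (be * be' + vdot v u')"

fun otr :: "'a::field oct \<Rightarrow> 'a" where
  "otr (Oct al u v be) = al + be"

fun onorm :: "'a::field oct \<Rightarrow> 'a" where
  "onorm (Oct al u v be) = al * be - vdot u v"

datatype nword = Letter nat | Mul nword nword

fun letters :: "nword \<Rightarrow> nat set" where
  "letters (Letter i) = {i}"
| "letters (Mul w1 w2) = letters w1 \<union> letters w2"

fun weval :: "nword \<Rightarrow> (nat \<Rightarrow> 'a::field oct) \<Rightarrow> 'a oct" where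
  "weval (Letter i) a = a i"
| "weval (Mul w1 w2) a = omult (weval w1 a) (weval w2 a)"

inductive_set gen_alg :: "('b \<Rightarrow> 'a::field) set \<Rightarrow> ('b \<Rightarrow> 'a) set" for G where
  const: "(\<lambda>_. c) \<in> gen_alg G"
| gen: "g \<in> G \<Longrightarrow> g \<in> gen_alg G"
| add: "f \<in> gen_alg G \<Longrightarrow> g \<in> gen_alg G \<Longrightarrow> (\<lambda>x. f x + g x) \<in> gen_alg G"
| mult: "f \<in> gen_alg G \<Longrightarrow> g \<in> gen_alg G \<Longrightarrow> (\<lambda>x. f x * g x) \<in> gen_alg G"

definition norm_funs :: "nat \<Rightarrow> ((nat \<Rightarrow> 'a::field oct) \<Rightarrow> 'a) set" where
  "norm_funs n = {(\<lambda>a. onorm (a i)) | i. 1 \<le> i \<and> i \<le> n}"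

definition T_alg :: "nat \<Rightarrow> ((nat \<Rightarrow> 'a::field oct) \<Rightarrow> 'a) set" where
  "T_alg n = gen_alg (norm_funs n \<union>
      {(\<lambda>a. otr (weval w a)) | w. letters w \<subseteq> {1..n}})"

definition left_prod :: "nat list \<Rightarrow> (nat \<Rightarrow> 'a::field oct) \<Rightarrow> 'a oct" where
  "left_prod is a = foldl omult (a (hd is)) (map a (tl is))"

definition S_set :: "nat \<Rightarrow> ((nat \<Rightarrow> 'a::field oct) \<Rightarrow> 'a) set" where
  "S_set n = norm_funs n \<union>
      {(\<lambda>a. otr (left_prod is a)) | is. is \<noteq> [] \<and> sorted_wrt (<) is \<and> set is \<subseteq> {1..n}}"

end

theory Submission
  imports Defs
begin

(* Generation: let A be the algebra generated by S_n and M the A-module spanned by the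
   increasing left-normed products a_{i_1} ... a_{i_k} (i_1 < ... < i_k).  The quadratic
   identity (x a) a = tr(a) x a - n(a) x, its linearisation and a companion identity for
   x (y a) rewrite every product of elements of M as an element of M whose coefficients are
   traces of elements of M, and the trace of an element of M lies in A.  Hence every word
   lies in M and its trace in A, so A = T_n.

   Minimality: each s in S_n is shown not to lie in the algebra generated by S_n - {s}.
   Norms and traces of single letters are separated by two points on which all other
   generators agree (using tr 1 = 2 = 0).  For s = tr(a_{i_1} ... a_{i_k}) with k >= 2 one
   evaluates along a curve t |-> a(t), on which every generator is a monomial in t and s is
   t^d; the exponents are chosen (as base-(n+2) digit patterns) so that no product of the
   other generators produces the monomial t^d. *)

notation omult (infixl "\<cdot>" 70)

type_synonym 'a tuple = "nat \<Rightarrow> 'a oct"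

lemma gen_alg_mono: "G \<subseteq> H \<Longrightarrow> gen_alg G \<subseteq> gen_alg H"
proof
  show "f \<in> gen_alg H" if "G \<subseteq> H" "f \<in> gen_alg G" for f
    using that(2,1) by (induction f rule: gen_alg.induct) (auto intro: gen_alg.intros)
qed

lemma gen_alg_subset: "G \<subseteq> gen_alg H \<Longrightarrow> gen_alg G \<subseteq> gen_alg H"
proof
  show "f \<in> gen_alg H" if "G \<subseteq> gen_alg H" "f \<in> gen_alg G" for f
    using that(2,1) by (induction f rule: gen_alg.induct) (auto intro: gen_alg.intros)
qed

lemma gen_alg_diff:
  assumes "f \<in> gen_alg G" "g \<in> gen_alg G"
  shows "(\<lambda>x. f x - g x) \<in> gen_alg G"
  using gen_alg.add[OF assms(1) gen_alg.mult[OF gen_alg.const[of "- 1"] assms(2)]] by simp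

lemma gen_alg_eq_at:
  assumes "f \<in> gen_alg G" "\<forall>g\<in>G. g p = g q"
  shows "f p = f q"
  using assms by (induction f rule: gen_alg.induct) auto

lemma oct_vec3_cases:
  obtains a u1 u2 u3 v1 v2 v3 b where "x = Oct a (V3 u1 u2 u3) (V3 v1 v2 v3) b"
  by (metis oct.exhaust vec3.exhaust)

instantiation oct :: (field) ab_group_add
begin

definition zero_oct :: "'a oct" where
  "0 = Oct 0 (V3 0 0 0) (V3 0 0 0) 0"

fun plus_oct :: "'a oct \<Rightarrow> 'a oct \<Rightarrow> 'a oct" where
  "Oct a u v b + Oct a' u' v' b' = Oct (a + a') (vadd u u') (vadd v v') (b + b')"

fun uminus_oct :: "'a oct \<Rightarrow> 'a oct" where
  "- Oct a u v b = Oct (- a) (vscale (- 1) u) (vscale (- 1) v) (- b)"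

definition minus_oct :: "'a oct \<Rightarrow> 'a oct \<Rightarrow> 'a oct" where
  "x - y = x + - (y :: 'a oct)"

instance
proof
  fix x y z :: "'a oct"
  show "x + y + z = x + (y + z)"
    by (cases x rule: oct_vec3_cases; cases y rule: oct_vec3_cases; cases z rule: oct_vec3_cases)
      (simp add: algebra_simps)
  show "x + y = y + x"
    by (cases x rule: oct_vec3_cases; cases y rule: oct_vec3_cases) (simp add: algebra_simps)
  show "0 + x = x"
    by (cases x rule: oct_vec3_cases) (simp add: zero_oct_def)
  show "- x + x = 0"
    by (cases x rule: oct_vec3_cases) (simp add: zero_oct_def)
  show "x - y = x + - y"
    by (simp add: minus_oct_def)
qed

end

instantiation oct :: (field) one
begin

definition one_oct :: "'a oct" where
  "1 = Oct 1 (V3 0 0 0) (V3 0 0 0) 1"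

instance ..

end

fun oscale :: "'a::field \<Rightarrow> 'a oct \<Rightarrow> 'a oct" (infixr "*\<^sub>o" 75) where
  "c *\<^sub>o Oct a u v b = Oct (c * a) (vscale c u) (vscale c v) (c * b)"

lemma minus_Oct [simp]:
  "Oct a u v b - Oct a' u' v' b' = Oct (a - a') (vsub u u') (vsub v v') (b - b')"
  by (cases u rule: vec3.exhaust; cases v rule: vec3.exhaust; cases u' rule: vec3.exhaust;
      cases v' rule: vec3.exhaust) (simp add: minus_oct_def)

lemma omult_one_left [simp]: "1 \<cdot> x = x"
  by (cases x rule: oct_vec3_cases) (simp add: one_oct_def)

lemma omult_one_right [simp]: "x \<cdot> 1 = x"
  by (cases x rule: oct_vec3_cases) (simp add: one_oct_def)

lemma omult_zero_left [simp]: "0 \<cdot> x = 0"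
  by (cases x rule: oct_vec3_cases) (simp add: zero_oct_def)

lemma omult_zero_right [simp]: "x \<cdot> 0 = 0"
  by (cases x rule: oct_vec3_cases) (simp add: zero_oct_def)

lemma omult_add_left [simp]: "(x + y) \<cdot> z = x \<cdot> z + y \<cdot> z"
  by (cases x rule: oct_vec3_cases; cases y rule: oct_vec3_cases; cases z rule: oct_vec3_cases)
     (simp add: algebra_simps)

lemma omult_add_right [simp]: "z \<cdot> (x + y) = z \<cdot> x + z \<cdot> y"
  by (cases x rule: oct_vec3_cases; cases y rule: oct_vec3_cases; cases z rule: oct_vec3_cases)
     (simp add: algebra_simps)

lemma omult_oscale_left [simp]: "(c *\<^sub>o x) \<cdot> y = c *\<^sub>o (x \<cdot> y)"
  by (cases x rule: oct_vec3_cases; cases y rule: oct_vec3_cases) (simp add: algebra_simps)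

lemma omult_oscale_right [simp]: "x \<cdot> (c *\<^sub>o y) = c *\<^sub>o (x \<cdot> y)"
  by (cases x rule: oct_vec3_cases; cases y rule: oct_vec3_cases) (simp add: algebra_simps)

lemma oscale_oscale [simp]: "c *\<^sub>o d *\<^sub>o x = (c * d) *\<^sub>o x"
  by (cases x rule: oct_vec3_cases) (simp add: algebra_simps)

lemma oscale_add [simp]: "c *\<^sub>o (x + y) = c *\<^sub>o x + c *\<^sub>o y"
  by (cases x rule: oct_vec3_cases; cases y rule: oct_vec3_cases) (simp add: algebra_simps)

lemma oscale_one [simp]: "1 *\<^sub>o x = x"
  by (cases x rule: oct_vec3_cases) simp

lemma oscale_minus_one: "(- 1) *\<^sub>o x = - x"
  by (cases x rule: oct_vec3_cases) simp

lemma otr_add [simp]: "otr (x + y) = otr x + otr y"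
  by (cases x rule: oct_vec3_cases; cases y rule: oct_vec3_cases) simp

lemma otr_oscale [simp]: "otr (c *\<^sub>o x) = c * otr x"
  by (cases x rule: oct_vec3_cases) (simp add: algebra_simps)

lemma otr_zero [simp]: "otr 0 = 0"
  by (simp add: zero_oct_def)

lemma otr_one [simp]: "otr 1 = 1 + 1"
  by (simp add: one_oct_def)

lemma onorm_zero [simp]: "onorm 0 = 0"
  by (simp add: zero_oct_def)

lemma onorm_one [simp]: "onorm 1 = 1"
  by (simp add: one_oct_def)

lemma onorm_oscale [simp]: "onorm (c *\<^sub>o x) = c\<^sup>2 * onorm x"
  by (cases x rule: oct_vec3_cases) (simp add: algebra_simps power2_eq_square)

lemma otr_omult_commute: "otr (x \<cdot> y) = otr (y \<cdot> x)"
  by (cases x rule: oct_vec3_cases; cases y rule: oct_vec3_cases) (simp add: algebra_simps)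

lemma omult_right_square: "x \<cdot> a \<cdot> a = otr a *\<^sub>o (x \<cdot> a) - onorm a *\<^sub>o x"
  by (cases x rule: oct_vec3_cases; cases a rule: oct_vec3_cases) (simp add: algebra_simps)

lemma omult_right_swap:
  "x \<cdot> a \<cdot> b = otr a *\<^sub>o (x \<cdot> b) + otr b *\<^sub>o (x \<cdot> a)
     - (otr a * otr b - otr (a \<cdot> b)) *\<^sub>o x - x \<cdot> b \<cdot> a"
  by (cases x rule: oct_vec3_cases; cases a rule: oct_vec3_cases; cases b rule: oct_vec3_cases)
     (simp add: algebra_simps)

lemma omult_left_shift:
  "x \<cdot> (y \<cdot> a) = x \<cdot> a \<cdot> y + otr x *\<^sub>o (y \<cdot> a) - otr (x \<cdot> a) *\<^sub>o y
     - (otr x * otr y - otr (x \<cdot> y)) *\<^sub>o a + (otr y * otr (x \<cdot> a) - otr (x \<cdot> a \<cdot> y)) *\<^sub>o 1"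
  by (cases x rule: oct_vec3_cases; cases a rule: oct_vec3_cases; cases y rule: oct_vec3_cases)
     (simp add: algebra_simps one_oct_def)

section \<open>Generation of \<open>T\<^sub>n\<close> by \<open>S\<^sub>n\<close>\<close>

definition lnp :: "nat list \<Rightarrow> 'a::field tuple \<Rightarrow> 'a oct" where
  "lnp is a = foldl omult 1 (map a is)"

lemma lnp_Nil [simp]: "lnp [] a = 1"
  by (simp add: lnp_def)

lemma lnp_snoc [simp]: "lnp (is @ [i]) a = lnp is a \<cdot> a i"
  by (simp add: lnp_def)

lemma lnp_singleton [simp]: "lnp [i] = (\<lambda>a. a i)"
  by (simp add: lnp_def fun_eq_iff)

lemma left_prod_eq_lnp: "is \<noteq> [] \<Longrightarrow> left_prod is a = lnp is a"
  by (cases "is") (simp_all add: lnp_def left_prod_def)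

lemma lnp_eq_zero: "i \<in> set is \<Longrightarrow> a i = 0 \<Longrightarrow> lnp is a = 0"
  by (induction "is" rule: rev_induct) auto

abbreviation S_alg :: "nat \<Rightarrow> ('a::field tuple \<Rightarrow> 'a) set" where
  "S_alg n \<equiv> gen_alg (S_set n)"

lemma otr_lnp_in_S_alg:
  assumes "sorted_wrt (<) is" "set is \<subseteq> {1..n}"
  shows "(\<lambda>a. otr (lnp is a)) \<in> S_alg n"
proof (cases "is = []")
  case True
  then show ?thesis by (simp add: gen_alg.const)
next
  case False
  with assms have "(\<lambda>a. otr (left_prod is a)) \<in> S_set n"
    unfolding S_set_def by blast
  with False show ?thesis by (auto simp: left_prod_eq_lnp intro: gen_alg.gen)
qed

lemma otr_letter_in_S_alg: "i \<in> {1..n} \<Longrightarrow> (\<lambda>a. otr (a i)) \<in> S_alg n"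
  using otr_lnp_in_S_alg[of "[i]" n] by simp

lemma onorm_letter_in_S_alg: "i \<in> {1..n} \<Longrightarrow> (\<lambda>a. onorm (a i)) \<in> S_alg n"
  by (intro gen_alg.gen) (auto simp: S_set_def norm_funs_def)

lemma otr_pair_in_S_alg:
  assumes "i \<in> {1..n}" "j \<in> {1..n}" "i < j"
  shows "(\<lambda>a. otr (a j \<cdot> a i)) \<in> S_alg n"
  using otr_lnp_in_S_alg[of "[i, j]" n] assms by (simp add: lnp_def otr_omult_commute)

inductive_set lnp_span :: "nat \<Rightarrow> nat set \<Rightarrow> ('a::field tuple \<Rightarrow> 'a oct) set"
  for n :: nat and U :: "nat set" where
  basis: "c \<in> S_alg n \<Longrightarrow> sorted_wrt (<) is \<Longrightarrow> set is \<subseteq> U \<Longrightarrow>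
     (\<lambda>a. c a *\<^sub>o lnp is a) \<in> lnp_span n U"
| add: "f \<in> lnp_span n U \<Longrightarrow> g \<in> lnp_span n U \<Longrightarrow> (\<lambda>a. f a + g a) \<in> lnp_span n U"

lemma lnp_in_lnp_span: "sorted_wrt (<) is \<Longrightarrow> set is \<subseteq> U \<Longrightarrow> lnp is \<in> lnp_span n U"
  using lnp_span.basis[OF gen_alg.const[of 1]] by simp

lemma lnp_span_scale:
  assumes "c \<in> S_alg n" "f \<in> lnp_span n U"
  shows "(\<lambda>a. c a *\<^sub>o f a) \<in> lnp_span n U"
  using assms(2,1)
proof (induction f rule: lnp_span.induct)
  case (basis d "is")
  then show ?case
    using lnp_span.basis[OF gen_alg.mult[OF basis.prems basis.hyps(1)]] by simp
qed (simp add: lnp_span.add)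

lemma lnp_span_diff:
  assumes "f \<in> lnp_span n U" "g \<in> lnp_span n U"
  shows "(\<lambda>a. f a - g a) \<in> lnp_span n U"
  using lnp_span.add[OF assms(1) lnp_span_scale[OF gen_alg.const[of "- 1"] assms(2)]]
  by (simp add: oscale_minus_one)

lemma lnp_span_mono: "f \<in> lnp_span n U \<Longrightarrow> U \<subseteq> U' \<Longrightarrow> f \<in> lnp_span n U'"
  by (induction f rule: lnp_span.induct) (auto intro: lnp_span.intros)

lemma otr_lnp_span_in_S_alg:
  "f \<in> lnp_span n U \<Longrightarrow> U \<subseteq> {1..n} \<Longrightarrow> (\<lambda>a. otr (f a)) \<in> S_alg n"
proof (induction f rule: lnp_span.induct)
  case (basis c "is")
  then show ?case using gen_alg.mult[OF basis(1) otr_lnp_in_S_alg] by auto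
qed (simp add: gen_alg.add)

lemma lnp_span_omult_greater_letter:
  "f \<in> lnp_span n U \<Longrightarrow> (\<forall>u\<in>U. u < j) \<Longrightarrow> (\<lambda>a. f a \<cdot> a j) \<in> lnp_span n (insert j U)"
proof (induction f rule: lnp_span.induct)
  case (basis c "is")
  then have "(\<lambda>a. c a *\<^sub>o lnp (is @ [j]) a) \<in> lnp_span n (insert j U)"
    by (intro lnp_span.basis) (auto simp: sorted_wrt_append)
  then show ?case by simp
qed (simp add: lnp_span.add)

text \<open>Right multiplication by a letter is reduced to increasing products by the
  quadratic identities: a repeated last letter is removed by \<open>omult_right_square\<close>,
  an out-of-order one is moved inwards by \<open>omult_right_swap\<close>.\<close>

lemma lnp_omult_letter_in_lnp_span:
  assumes "sorted_wrt (<) is" "set is \<subseteq> {1..n}" "j \<in> {1..n}"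
  shows "(\<lambda>a. lnp is a \<cdot> a j) \<in> lnp_span n (insert j (set is))"
  using assms
proof (induction "is" rule: rev_induct)
  case Nil
  show ?case using lnp_in_lnp_span[of "[j]" "{j}" n] by simp
next
  case (snoc l bs)
  let ?U = "insert j (set (bs @ [l]))"
  have bs: "sorted_wrt (<) bs" "set bs \<subseteq> {1..n}" and bs_less: "\<forall>i\<in>set bs. i < l"
    and l: "l \<in> {1..n}"
    using snoc.prems by (auto simp: sorted_wrt_append)
  have lnp_bs: "lnp bs \<in> lnp_span n ?U" and lnp_bsl: "lnp (bs @ [l]) \<in> lnp_span n ?U"
    using snoc.prems bs by (auto intro: lnp_in_lnp_span)
  have tr_l: "(\<lambda>a :: 'a tuple. otr (a l)) \<in> S_alg n" and tr_j: "(\<lambda>a :: 'a tuple. otr (a j)) \<in> S_alg n"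
    using l snoc.prems(3) by (auto intro: otr_letter_in_S_alg)
  consider "l < j" | "l = j" | "j < l" by arith
  then show ?case
  proof cases
    case 1
    then have "lnp (bs @ [l, j]) \<in> lnp_span n ?U"
      using snoc.prems by (intro lnp_in_lnp_span) (auto simp: sorted_wrt_append)
    moreover have "lnp (bs @ [l, j]) = (\<lambda>a :: 'a tuple. lnp (bs @ [l]) a \<cdot> a j)"
      by (simp add: lnp_def fun_eq_iff)
    ultimately show ?thesis by (rule subst[rotated])
  next
    case 2
    have "(\<lambda>a :: 'a tuple. otr (a l) *\<^sub>o lnp (bs @ [l]) a - onorm (a l) *\<^sub>o lnp bs a) \<in> lnp_span n ?U"
      using l by (intro lnp_span_diff lnp_span_scale tr_l lnp_bsl onorm_letter_in_S_alg lnp_bs)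
    with 2 show ?thesis by (simp add: omult_right_square)
  next
    case 3
    note IH = snoc.IH[OF bs snoc.prems(3)]
    have IH': "(\<lambda>a :: 'a tuple. lnp bs a \<cdot> a j) \<in> lnp_span n ?U"
      by (rule lnp_span_mono[OF IH]) auto
    have "(\<lambda>a :: 'a tuple. lnp bs a \<cdot> a j \<cdot> a l) \<in> lnp_span n (insert l (insert j (set bs)))"
      by (rule lnp_span_omult_greater_letter[OF IH]) (use bs_less 3 in auto)
    then have swapped: "(\<lambda>a :: 'a tuple. lnp bs a \<cdot> a j \<cdot> a l) \<in> lnp_span n ?U"
      by (rule lnp_span_mono) auto
    have "(\<lambda>a :: 'a tuple. otr (a l) * otr (a j) - otr (a l \<cdot> a j)) \<in> S_alg n"
      using l snoc.prems(3) 3 by (intro gen_alg_diff gen_alg.mult tr_l tr_j otr_pair_in_S_alg)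
    then have "(\<lambda>a :: 'a tuple. otr (a l) *\<^sub>o (lnp bs a \<cdot> a j) + otr (a j) *\<^sub>o lnp (bs @ [l]) a
        - (otr (a l) * otr (a j) - otr (a l \<cdot> a j)) *\<^sub>o lnp bs a - lnp bs a \<cdot> a j \<cdot> a l)
        \<in> lnp_span n ?U"
      by (intro lnp_span_diff lnp_span.add lnp_span_scale tr_l tr_j IH' lnp_bsl lnp_bs swapped)
    then show ?thesis
      by (simp add: omult_right_swap[of "lnp bs _" "_ l"])
  qed
qed

lemma lnp_span_omult_letter:
  assumes "f \<in> lnp_span n U" "U \<subseteq> {1..n}" "j \<in> {1..n}"
  shows "(\<lambda>a. f a \<cdot> a j) \<in> lnp_span n (insert j U)"
  using assms
proof (induction f rule: lnp_span.induct)
  case (basis c "is")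
  then have "(\<lambda>a. c a *\<^sub>o (lnp is a \<cdot> a j)) \<in> lnp_span n (insert j (set is))"
    by (intro lnp_span_scale lnp_omult_letter_in_lnp_span) auto
  then show ?case using basis by (auto elim: lnp_span_mono)
qed (simp add: lnp_span.add)

text \<open>Right multiplication by a product is reduced to right multiplication by its factors
  through the identity \<open>omult_left_shift\<close>, whose scalar coefficients are traces of elements
  already known to lie in the span.\<close>

lemma lnp_span_omult_lnp:
  assumes "sorted_wrt (<) js" "set js \<subseteq> {1..n}" "f \<in> lnp_span n {1..n}"
  shows "(\<lambda>a. f a \<cdot> lnp js a) \<in> lnp_span n {1..n}"
  using assms
proof (induction js arbitrary: f rule: rev_induct)
  case Nil
  then show ?case by simp
next
  case (snoc j ys)
  let ?M = "lnp_span n {1..n}"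
  have ys: "sorted_wrt (<) ys" "set ys \<subseteq> {1..n}" and j: "j \<in> {1..n}"
    using snoc.prems by (auto simp: sorted_wrt_append)
  have fj: "(\<lambda>a. f a \<cdot> a j) \<in> ?M"
    using lnp_span_omult_letter[OF snoc.prems(3) _ j] j by (simp add: insert_absorb)
  have fjy: "(\<lambda>a. f a \<cdot> a j \<cdot> lnp ys a) \<in> ?M" and fy: "(\<lambda>a. f a \<cdot> lnp ys a) \<in> ?M"
    using snoc.IH[OF ys] fj snoc.prems(3) by auto
  have lnp_ys: "lnp ys \<in> ?M" and lnp_ysj: "lnp (ys @ [j]) \<in> ?M" and one: "lnp [] \<in> ?M"
    using lnp_in_lnp_span[OF ys] lnp_in_lnp_span[OF snoc.prems(1,2)] by (auto intro: lnp_in_lnp_span)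
  have letter: "(\<lambda>a. a j) \<in> ?M"
    using lnp_in_lnp_span[of "[j]" "{1..n}" n] j by simp
  have tr: "(\<lambda>a. otr (g a)) \<in> S_alg n" if "g \<in> ?M" for g
    using otr_lnp_span_in_S_alg[OF that] by simp
  have "(\<lambda>a. f a \<cdot> a j \<cdot> lnp ys a + otr (f a) *\<^sub>o lnp (ys @ [j]) a
      - otr (f a \<cdot> a j) *\<^sub>o lnp ys a
      - (otr (f a) * otr (lnp ys a) - otr (f a \<cdot> lnp ys a)) *\<^sub>o a j
      + (otr (lnp ys a) * otr (f a \<cdot> a j) - otr (f a \<cdot> a j \<cdot> lnp ys a)) *\<^sub>o lnp [] a) \<in> ?M"
    by (intro lnp_span.add lnp_span_diff lnp_span_scale gen_alg_diff gen_alg.mult tr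
        fjy snoc.prems(3) fj fy lnp_ys lnp_ysj one letter)
  then show ?case by (simp add: omult_left_shift[of "f _" "lnp ys _"])
qed

lemma lnp_span_omult:
  assumes "f \<in> lnp_span n {1..n}" "g \<in> lnp_span n {1..n}"
  shows "(\<lambda>a. f a \<cdot> g a) \<in> lnp_span n {1..n}"
  using assms(2,1)
proof (induction g rule: lnp_span.induct)
  case (basis c "is")
  then show ?case using lnp_span_scale[OF basis(1) lnp_span_omult_lnp] by simp
qed (simp add: lnp_span.add)

lemma weval_in_lnp_span: "letters w \<subseteq> {1..n} \<Longrightarrow> weval w \<in> lnp_span n {1..n}"
proof (induction w)
  case (Letter i)
  then show ?case using lnp_in_lnp_span[of "[i]" "{1..n}" n] by simp
next
  case (Mul w1 w2)
  then show ?case using lnp_span_omult[of "weval w1" n "weval w2"] by (simp add: fun_eq_iff)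
qed

lemma T_alg_subset_S_alg: "T_alg n \<subseteq> S_alg n"
  unfolding T_alg_def
proof (rule gen_alg_subset)
  have "(\<lambda>a. otr (weval w a)) \<in> S_alg n" if "letters w \<subseteq> {1..n}" for w
    using otr_lnp_span_in_S_alg[OF weval_in_lnp_span[OF that]] by simp
  then show "norm_funs n \<union> {\<lambda>a. otr (weval w a) |w. letters w \<subseteq> {1..n}} \<subseteq> S_alg n"
    by (auto simp: S_set_def intro: gen_alg.gen)
qed

lemma weval_left_normed_word:
  "weval (foldl (\<lambda>w j. Mul w (Letter j)) w js) a = foldl omult (weval w a) (map a js)"
  by (induction js arbitrary: w) auto

lemma letters_left_normed_word:
  "letters (foldl (\<lambda>w j. Mul w (Letter j)) w js) = letters w \<union> set js"
  by (induction js arbitrary: w) auto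

lemma S_set_subset_T_alg: "S_set n \<subseteq> T_alg n"
proof
  fix g :: "'a::field tuple \<Rightarrow> 'a"
  assume "g \<in> S_set n"
  then consider "g \<in> norm_funs n"
    | i js where "g = (\<lambda>a. otr (left_prod (i # js) a))" "set (i # js) \<subseteq> {1..n}"
    unfolding S_set_def by (auto simp: neq_Nil_conv)
  then show "g \<in> T_alg n"
  proof cases
    case 1
    then show ?thesis unfolding T_alg_def by (auto intro: gen_alg.gen)
  next
    case (2 i js)
    define w where "w = foldl (\<lambda>w j. Mul w (Letter j)) (Letter i) js"
    have "g = (\<lambda>a. otr (weval w a))" and "letters w \<subseteq> {1..n}"
      using 2 by (simp_all add: w_def weval_left_normed_word letters_left_normed_word left_prod_def)
    then show ?thesis unfolding T_alg_def by (auto intro!: gen_alg.gen)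
  qed
qed

lemma S_alg_eq_T_alg: "S_alg n = T_alg n"
proof
  show "S_alg n \<subseteq> T_alg n"
    using S_set_subset_T_alg unfolding T_alg_def by (rule gen_alg_subset)
  show "T_alg n \<subseteq> S_alg n"
    by (rule T_alg_subset_S_alg)
qed

section \<open>Separating norms and traces of single letters\<close>

lemma two_eq_zero_if_CHAR_2: "CHAR('a::semiring_1) = 2 \<Longrightarrow> (2::'a) = 0"
  using of_nat_CHAR[where 'a = 'a] by simp

lemma S_set_cases:
  assumes "g \<in> S_set n"
  obtains (norm) i where "i \<in> {1..n}" "g = (\<lambda>a. onorm (a i))"
  | (trace) "is" where "is \<noteq> []" "sorted_wrt (<) is" "set is \<subseteq> {1..n}" "g = (\<lambda>a. otr (lnp is a))"
  using assms unfolding S_set_def norm_funs_def by (auto simp: left_prod_eq_lnp)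

lemma lnp_eq_zero_if_supported_at:
  assumes "sorted_wrt (<) is" "is \<noteq> []" "is \<noteq> [i]" "\<forall>j. j \<noteq> i \<longrightarrow> a j = 0"
  shows "lnp is a = 0"
proof -
  have "set is \<noteq> {i}"
    using strict_sorted_equal[OF _ assms(1), of "[i]"] assms(3) by auto
  with assms(2) obtain j where "j \<in> set is" "j \<noteq> i"
    by (metis empty_iff insertI1 set_empty subsetI subset_singletonD)
  with assms(4) show ?thesis by (intro lnp_eq_zero) auto
qed

text \<open>For a norm \<open>n(a\<^sub>i)\<close> the separating points are \<open>a\<^sub>i = 1\<close> versus \<open>a = 0\<close>: they are
  distinguished by no other element of \<open>S\<^sub>n\<close> because \<open>tr 1 = 2 = 0\<close>.\<close>

lemma onorm_notin_gen_alg_others: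
  assumes "CHAR('a::field) = 2" "i \<in> {1..n}"
  defines "s \<equiv> \<lambda>a :: 'a tuple. onorm (a i)"
  shows "s \<notin> gen_alg (S_set n - {s})"
proof
  define p :: "'a tuple" where "p = (\<lambda>j. if j = i then 1 else 0)"
  assume mem: "s \<in> gen_alg (S_set n - {s})"
  have others: "g p = g (\<lambda>_. 0)" if "g \<in> S_set n" "g \<noteq> s" for g
    using that(1)
  proof (cases rule: S_set_cases)
    case (norm j)
    with that have "j \<noteq> i" by (auto simp: s_def)
    with norm show ?thesis by (simp add: p_def)
  next
    case (trace "is")
    show ?thesis
    proof (cases "is = [i]")
      case True
      with trace assms(1) show ?thesis
        by (simp add: p_def two_eq_zero_if_CHAR_2)
    next
      case False
      with trace show ?thesis
        by (simp add: lnp_eq_zero_if_supported_at p_def)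
    qed
  qed
  have "s p = s (\<lambda>_. 0)"
    using gen_alg_eq_at[OF mem, of p "\<lambda>_. 0"] others by blast
  then show False by (simp add: s_def p_def one_oct_def)
qed

lemma otr_notin_gen_alg_others:
  fixes i :: nat
  defines "s \<equiv> \<lambda>a :: 'a::field tuple. otr (a i)"
  shows "s \<notin> gen_alg (S_set n - {s})"
proof
  define p :: "'a tuple" where "p = (\<lambda>j. if j = i then Oct 1 (V3 0 0 0) (V3 0 0 0) 0 else 0)"
  assume mem: "s \<in> gen_alg (S_set n - {s})"
  have others: "g p = g (\<lambda>_. 0)" if "g \<in> S_set n" "g \<noteq> s" for g
    using that(1)
  proof (cases rule: S_set_cases)
    case (norm j)
    then show ?thesis by (simp add: p_def)
  next
    case (trace "is")
    with that have "is \<noteq> [i]" by (auto simp: s_def)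
    with trace show ?thesis
      by (simp add: lnp_eq_zero_if_supported_at p_def)
  qed
  have "s p = s (\<lambda>_. 0)"
    using gen_alg_eq_at[OF mem, of p "\<lambda>_. 0"] others by blast
  then show False by (simp add: s_def p_def)
qed

section \<open>Weights and admissible polynomials\<close>

lemma sum_digits_less_power:
  fixes f :: "nat \<Rightarrow> nat"
  assumes "\<forall>j<N. f j < b"
  shows "(\<Sum>j<N. f j * b ^ j) < b ^ N"
  using assms
proof (induction N)
  case (Suc N)
  then have "(\<Sum>j<Suc N. f j * b ^ j) < b ^ N + f N * b ^ N" by simp
  also have "\<dots> = (f N + 1) * b ^ N" by simp
  also have "\<dots> \<le> b * b ^ N"
    using Suc.prems by (intro mult_right_mono) (auto simp: Suc_le_eq)
  finally show ?case by simp
qed simp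

lemma sum_digits_eqD:
  fixes f g :: "nat \<Rightarrow> nat"
  assumes "\<forall>j<N. f j < b" "\<forall>j<N. g j < b" "(\<Sum>j<N. f j * b ^ j) = (\<Sum>j<N. g j * b ^ j)"
    and "j < N"
  shows "f j = g j"
  using assms
proof (induction N arbitrary: j)
  case (Suc N)
  define A where "A = (\<Sum>j<N. f j * b ^ j)"
  define B where "B = (\<Sum>j<N. g j * b ^ j)"
  have A: "A < b ^ N" and B: "B < b ^ N"
    using Suc.prems(1,2) by (auto simp: A_def B_def intro: sum_digits_less_power)
  have eq: "A + f N * b ^ N = B + g N * b ^ N"
    using Suc.prems(3) by (simp add: A_def B_def)
  have "b ^ N \<noteq> 0"
    using A by linarith
  with A B have "f N = (A + f N * b ^ N) div b ^ N" "g N = (B + g N * b ^ N) div b ^ N"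
    by simp_all
  with eq have "f N = g N" by simp
  with eq have "A = B" by simp
  show ?case
  proof (cases "j = N")
    case False
    with Suc.prems(4) have "j < N" by simp
    with Suc.IH[of j] Suc.prems(1,2) \<open>A = B\<close> show ?thesis by (simp add: A_def B_def)
  qed (use \<open>f N = g N\<close> in simp)
qed simp

text \<open>Writing \<open>b = n + 2\<close>, a weight is \<open>b\<^bsup>n+1\<^esup> + b\<^sup>j\<close>: the high part counts the letters of a
  monomial and the low part records them as base-\<open>b\<close> digits, so that set weights can only be
  written as sums of weights in the obvious way.\<close>

definition weight :: "nat \<Rightarrow> nat \<Rightarrow> nat" where
  "weight n j = (n + 2) ^ (n + 1) + (n + 2) ^ j"

definition set_weight :: "nat \<Rightarrow> nat set \<Rightarrow> nat" where
  "set_weight n S = (\<Sum>j\<in>S. weight n j)"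

definition weight_combinations :: "nat \<Rightarrow> nat set \<Rightarrow> nat set" where
  "weight_combinations n V = range (\<lambda>D. \<Sum>j\<in>V. D j * weight n j)"

lemma set_weight_eq_sum_of_bool:
  "finite V \<Longrightarrow> S \<subseteq> V \<Longrightarrow> (\<Sum>j\<in>V. of_bool (j \<in> S) * weight n j) = set_weight n S"
  by (simp add: set_weight_def Int_absorb1)

lemma weight_combination_eq_set_weight:
  assumes V: "V \<subseteq> {..n}" and S: "S \<subseteq> V"
    and eq: "(\<Sum>j\<in>V. D j * weight n j) = set_weight n S" and j: "j \<in> V"
  shows "D j = of_bool (j \<in> S)"
proof -
  define b where "b = n + 2"
  define M where "M = b ^ Suc n"
  define E :: "nat \<Rightarrow> nat" where "E j = of_bool (j \<in> S)" for j
  have finV: "finite V" using V finite_subset by blast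
  have expand: "(\<Sum>j\<in>V. F j * weight n j)
      = (\<Sum>j\<in>V. F j) * M + (\<Sum>j<Suc n. (if j \<in> V then F j else 0) * b ^ j)" for F
  proof -
    have "F j * weight n j = F j * M + F j * b ^ j" for j
      by (simp add: weight_def M_def b_def distrib_left)
    then have "(\<Sum>j\<in>V. F j * weight n j) = (\<Sum>j\<in>V. F j) * M + (\<Sum>j\<in>V. F j * b ^ j)"
      by (simp add: sum.distrib sum_distrib_right)
    also have "(\<Sum>j\<in>V. F j * b ^ j) = (\<Sum>j<Suc n. (if j \<in> V then F j else 0) * b ^ j)"
      using V by (intro sum.mono_neutral_cong_left) auto
    finally show ?thesis .
  qed
  define rD where "rD = (\<Sum>j<Suc n. (if j \<in> V then D j else 0) * b ^ j)"
  define rE where "rE = (\<Sum>j<Suc n. (if j \<in> V then E j else 0) * b ^ j)"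
  have "card S \<le> card {..n}"
    using S V by (intro card_mono) auto
  then have card_S: "card S < b" by (simp add: b_def)
  have sum_E: "(\<Sum>j\<in>V. E j) = card S"
    using finV S by (simp add: E_def Int_absorb1)
  have "rE < M"
    unfolding rE_def M_def by (intro sum_digits_less_power) (auto simp: E_def b_def)
  have split: "(\<Sum>j\<in>V. D j) * M + rD = card S * M + rE"
  proof -
    have "(\<Sum>j\<in>V. D j) * M + rD = (\<Sum>j\<in>V. E j * weight n j)"
      unfolding rD_def expand[symmetric] eq E_def set_weight_eq_sum_of_bool[OF finV S] ..
    also have "\<dots> = card S * M + rE"
      unfolding rE_def expand sum_E ..
    finally show ?thesis .
  qed
  then have "(\<Sum>j\<in>V. D j) * M < (card S + 1) * M"
    using \<open>rE < M\<close> by (simp add: distrib_right)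
  then have "(\<Sum>j\<in>V. D j) < b"
    using card_S by (simp only: mult_less_cancel2) linarith
  then have D_less: "\<forall>i<Suc n. (if i \<in> V then D i else 0) < b"
    using finV by (auto intro: le_less_trans[OF member_le_sum])
  have "rD < M"
    unfolding rD_def M_def by (rule sum_digits_less_power[OF D_less])
  with split \<open>rE < M\<close> have "rD = rE"
    by (metis mod_mult_self3 mod_less)
  then have "(if j \<in> V then D j else 0) = (if j \<in> V then E j else 0)"
    unfolding rD_def rE_def using j V
    by (intro sum_digits_eqD[OF D_less]) (auto simp: E_def b_def)
  with j show ?thesis by (simp add: E_def)
qed

lemma set_weight_in_weight_combinations:
  "finite V \<Longrightarrow> S \<subseteq> V \<Longrightarrow> set_weight n S \<in> weight_combinations n V"
  unfolding weight_combinations_def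
  by (rule range_eqI[of _ _ "\<lambda>j. of_bool (j \<in> S)"]) (simp add: set_weight_def Int_absorb1)

lemma weight_combinations_add:
  "d \<in> weight_combinations n V \<Longrightarrow> e \<in> weight_combinations n V \<Longrightarrow>
    d + e \<in> weight_combinations n V"
  unfolding weight_combinations_def
  by (auto simp: image_iff sum.distrib[symmetric] distrib_right intro: exI[of _ "\<lambda>j. _ j + _ j"])

lemma set_weight_inj:
  assumes "V \<subseteq> {..n}" "S \<subseteq> V" "S' \<subseteq> V" "set_weight n S = set_weight n S'"
  shows "S = S'"
proof -
  have "finite V" using assms(1) finite_subset by blast
  have eq: "(\<Sum>j\<in>V. of_bool (j \<in> S) * weight n j) = set_weight n S'"
    unfolding set_weight_eq_sum_of_bool[OF \<open>finite V\<close> assms(2)] by (rule assms(4))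
  have "j \<in> S \<longleftrightarrow> j \<in> S'" if "j \<in> V" for j
    using weight_combination_eq_set_weight[where D = "\<lambda>j. of_bool (j \<in> S)", OF assms(1,3) eq that]
    by (simp only: of_bool_eq_iff)
  with assms(2,3) show ?thesis by auto
qed

text \<open>For the trace \<open>s\<close> of a product whose letters beyond the first two form \<open>R\<close>, and
  \<open>V = insert 0 R\<close>, the exponents \<open>set_weight n S\<close> of critical \<open>S\<close> are those that no other
  element of \<open>S\<^sub>n\<close> produces at the test point below, and \<open>set_weight n V\<close> is that of \<open>s\<close>.\<close>

definition critical :: "nat set \<Rightarrow> nat set \<Rightarrow> bool" where
  "critical V S \<longleftrightarrow> S \<subseteq> V \<and> S \<noteq> {} \<and> (0 \<notin> S \<or> S = V)"

lemma critical_split: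
  assumes "critical V S" "S' \<subseteq> S" "S' \<noteq> {}" "S - S' \<noteq> {}"
  shows "critical V S' \<or> critical V (S - S')"
  using assms unfolding critical_def by blast

definition admissible :: "nat \<Rightarrow> nat set \<Rightarrow> 'a::comm_semiring_1 poly \<Rightarrow> bool" where
  "admissible n V p \<longleftrightarrow> (\<forall>d. coeff p d \<noteq> 0 \<longrightarrow> d \<in> weight_combinations n V)
     \<and> (\<forall>S. critical V S \<longrightarrow> coeff p (set_weight n S) = 0)"

lemma admissible_const:
  assumes "finite V"
  shows "admissible n V [:c:]"
  unfolding admissible_def
proof (intro conjI allI impI)
  fix d assume "coeff [:c:] d \<noteq> 0"
  then have "d = 0" by (cases d) auto
  then show "d \<in> weight_combinations n V"
    unfolding weight_combinations_def by (intro range_eqI[of _ _ "\<lambda>_. 0"]) simp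
next
  fix S assume "critical V S"
  then have "set_weight n S \<noteq> 0"
    using assms finite_subset by (fastforce simp: critical_def set_weight_def weight_def)
  then show "coeff [:c:] (set_weight n S) = 0" by (cases "set_weight n S") auto
qed

lemma admissible_add:
  assumes "admissible n V p" "admissible n V q"
  shows "admissible n V (p + q)"
proof -
  have "coeff p d \<noteq> 0 \<or> coeff q d \<noteq> 0" if "coeff (p + q) d \<noteq> 0" for d
    using that by (cases "coeff p d = 0") auto
  with assms show ?thesis unfolding admissible_def by auto
qed

lemma admissible_monom:
  assumes "d \<in> weight_combinations n V" "\<And>S. critical V S \<Longrightarrow> set_weight n S \<noteq> d"
  shows "admissible n V (monom 1 d)"
  using assms unfolding admissible_def by (auto simp: coeff_monom)

text \<open>The critical exponent of a product splits into exponents of the factors, which by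
  \<open>weight_combination_eq_set_weight\<close> are themselves set weights, one of them critical.\<close>

lemma admissible_mult:
  fixes p q :: "'a::{comm_semiring_1, semiring_no_zero_divisors} poly"
  assumes V: "V \<subseteq> {..n}" and p: "admissible n V p" and q: "admissible n V q"
  shows "admissible n V (p * q)"
proof -
  have combination: "d \<in> weight_combinations n V" if "coeff p d \<noteq> 0" for d
    using p that by (simp add: admissible_def)
  have combination': "d \<in> weight_combinations n V" if "coeff q d \<noteq> 0" for d
    using q that by (simp add: admissible_def)
  have split: "\<exists>S'\<subseteq>S. d = set_weight n S' \<and> e = set_weight n (S - S')"
    if "d \<in> weight_combinations n V" "e \<in> weight_combinations n V"
      and de: "d + e = set_weight n S" and "S \<subseteq> V" for d e S
  proof -
    obtain D E where d: "d = (\<Sum>j\<in>V. D j * weight n j)" and e: "e = (\<Sum>j\<in>V. E j * weight n j)"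
      using \<open>d \<in> weight_combinations n V\<close> \<open>e \<in> weight_combinations n V\<close>
      by (auto simp: weight_combinations_def)
    have "(\<Sum>j\<in>V. (D j + E j) * weight n j) = set_weight n S"
      using de by (simp add: d e sum.distrib distrib_right)
    then have DE: "D j + E j = of_bool (j \<in> S)" if "j \<in> V" for j
      using weight_combination_eq_set_weight[OF V \<open>S \<subseteq> V\<close> _ that] by simp
    define S' where "S' = {j \<in> S. D j = 1}"
    have "finite V" using V finite_subset by blast
    have "D j = of_bool (j \<in> S')" "E j = of_bool (j \<in> S - S')" if "j \<in> V" for j
      using DE[OF that] by (auto simp: S'_def of_bool_def split: if_splits)
    then have "d = (\<Sum>j\<in>V. of_bool (j \<in> S') * weight n j)"
      and "e = (\<Sum>j\<in>V. of_bool (j \<in> S - S') * weight n j)"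
      unfolding d e by (auto intro: sum.cong)
    moreover have "S' \<subseteq> S" "S' \<subseteq> V" "S - S' \<subseteq> V"
      using \<open>S \<subseteq> V\<close> by (auto simp: S'_def)
    ultimately show ?thesis
      by (simp_all only: set_weight_eq_sum_of_bool[OF \<open>finite V\<close>]) blast
  qed
  have "coeff p i * coeff q (set_weight n S - i) = 0" if "critical V S" "i \<le> set_weight n S" for S i
  proof (rule ccontr)
    assume "coeff p i * coeff q (set_weight n S - i) \<noteq> 0"
    then have cp: "coeff p i \<noteq> 0" and cq: "coeff q (set_weight n S - i) \<noteq> 0" by auto
    have "i + (set_weight n S - i) = set_weight n S" "S \<subseteq> V"
      using that by (auto simp: critical_def)
    then obtain S' where S': "S' \<subseteq> S" "i = set_weight n S'" "set_weight n S - i = set_weight n (S - S')"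
      using split[OF combination[OF cp] combination'[OF cq]] by blast
    have "critical V S' \<or> critical V (S - S')"
    proof (cases "S' = {} \<or> S - S' = {}")
      case True
      with S' that(1) show ?thesis by (auto simp: Diff_eq_empty_iff subset_antisym)
    qed (use critical_split[OF that(1) S'(1)] in auto)
    with p q cp cq S' show False by (auto simp: admissible_def)
  qed
  then have "coeff (p * q) (set_weight n S) = 0" if "critical V S" for S
    using that by (auto simp: coeff_mult intro!: sum.neutral)
  moreover have "d \<in> weight_combinations n V" if "coeff (p * q) d \<noteq> 0" for d
  proof -
    obtain i where "i \<le> d" "coeff p i \<noteq> 0" "coeff q (d - i) \<noteq> 0"
      using \<open>coeff (p * q) d \<noteq> 0\<close> by (auto simp: coeff_mult elim: sum.not_neutral_contains_not_neutral)
    with \<open>i \<le> d\<close> show ?thesis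
      using weight_combinations_add[OF combination combination'] by fastforce
  qed
  ultimately show ?thesis by (simp add: admissible_def)
qed

section \<open>Separating traces of longer products\<close>

lemma infinite_UNIV_alg_closed_field: "infinite (UNIV :: 'a::alg_closed_field set)"
proof
  assume fin: "finite (UNIV :: 'a set)"
  define Q :: "'a poly" where "Q = (\<Prod>a\<in>UNIV. [:- a, 1:])"
  define P where "P = Q + 1"
  have "degree Q = card (UNIV :: 'a set)"
    unfolding Q_def by (subst degree_prod_eq_sum_degree) auto
  also have "\<dots> > 0"
    using fin by (simp add: card_gt_0_iff)
  finally have "degree P > 0"
    unfolding P_def by (subst degree_add_eq_left) auto
  then obtain x where "poly P x = 0"
    using alg_closed_imp_poly_has_root by blast
  moreover have "poly P x = 1"
    using fin by (simp add: P_def Q_def poly_prod prod_zero)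
  ultimately show False by simp
qed

lemma poly_eqI_infinite:
  fixes p q :: "'a::idom poly"
  assumes "infinite (UNIV :: 'a set)" "\<And>t. poly p t = poly q t"
  shows "p = q"
proof (rule ccontr)
  assume "p \<noteq> q"
  then have "finite {t. poly (p - q) t = 0}"
    by (intro poly_roots_finite) simp
  with assms show False by simp
qed

text \<open>The index \<open>0\<close>, which is not a letter, stands for the leading pair \<open>a\<^sub>i, a\<^sub>k\<close>: at the
  test point these are nilpotent with \<open>tr (a\<^sub>i a\<^sub>k) = t ^ weight n 0\<close>.\<close>

definition test_point :: "nat \<Rightarrow> nat \<Rightarrow> nat \<Rightarrow> nat set \<Rightarrow> 'a::field \<Rightarrow> 'a tuple" where
  "test_point n i k R t j =
     (if j = i then Oct 0 (V3 (t ^ weight n 0) 0 0) (V3 0 0 0) 0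
      else if j = k then Oct 0 (V3 0 0 0) (V3 1 0 0) 0
      else if j \<in> R then t ^ weight n j *\<^sub>o 1 else 0)"

lemma onorm_test_point:
  assumes "i \<notin> R" "k \<notin> R"
  shows "onorm (test_point n i k R t j) = (if j \<in> R then t ^ (2 * weight n j) else 0)"
  using assms by (auto simp: test_point_def power_mult[symmetric] mult.commute)

lemma lnp_test_point:
  assumes "i \<notin> R" "k \<notin> R"
  shows "lnp J (test_point n i k R t) =
    (\<Prod>j\<leftarrow>J. if j \<in> R then t ^ weight n j else 1) *\<^sub>o lnp (filter (\<lambda>j. j \<notin> R) J) (test_point n i k R t)"
proof (induction J rule: rev_induct)
  case (snoc j J)
  then show ?case
    using assms by (cases "j \<in> R") (auto simp: test_point_def mult.commute)
qed simp

lemma distinct_subset_pair_cases: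
  assumes "distinct xs" "set xs \<subseteq> {x, y}"
  shows "xs \<in> {[], [x], [y], [x, y], [y, x]}"
  using assms by (cases xs; cases "tl xs"; cases "tl (tl xs)") auto

lemma otr_lnp_test_point:
  fixes t :: "'a::field"
  assumes "CHAR('a) = 2" "R \<subseteq> {1..n}" "i \<notin> R" "k \<notin> R" "i \<noteq> k"
    and "distinct J" "set J \<subseteq> insert i (insert k R)"
  shows "otr (lnp J (test_point n i k R t)) =
    (if i \<in> set J \<and> k \<in> set J then t ^ set_weight n (insert 0 (set J \<inter> R)) else 0)"
proof -
  define F where "F = filter (\<lambda>j. j \<notin> R) J"
  have "F \<in> {[], [i], [k], [i, k], [k, i]}"
    using assms(6,7) by (intro distinct_subset_pair_cases) (auto simp: F_def)
  then have otr_F: "otr (lnp F (test_point n i k R t)) =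
      (if i \<in> set F \<and> k \<in> set F then t ^ weight n 0 else 0)"
    using assms(1,5) by (elim insertE) (simp_all add: test_point_def lnp_def two_eq_zero_if_CHAR_2)
  have "(\<Prod>j\<leftarrow>J. if j \<in> R then t ^ weight n j else 1) = (\<Prod>j\<in>set J \<inter> R. t ^ weight n j)"
    using assms(6) by (simp add: prod.distinct_set_conv_list[symmetric] prod.inter_restrict)
  also have "\<dots> = t ^ set_weight n (set J \<inter> R)"
    by (simp add: set_weight_def power_sum)
  finally have "otr (lnp J (test_point n i k R t)) =
      t ^ set_weight n (set J \<inter> R) * otr (lnp F (test_point n i k R t))"
    by (subst lnp_test_point[OF assms(3,4)]) (simp add: F_def)
  moreover have "set_weight n (insert 0 (set J \<inter> R)) = weight n 0 + set_weight n (set J \<inter> R)"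
    unfolding set_weight_def using assms(2) by (subst sum.insert) auto
  moreover have "i \<in> set F \<longleftrightarrow> i \<in> set J" "k \<in> set F \<longleftrightarrow> k \<in> set J"
    using assms(3,4) by (auto simp: F_def)
  ultimately show ?thesis
    by (simp add: otr_F power_add mult.commute)
qed

definition admissible_at :: "nat \<Rightarrow> nat \<Rightarrow> nat \<Rightarrow> nat set \<Rightarrow> ('a::field tuple \<Rightarrow> 'a) \<Rightarrow> bool" where
  "admissible_at n i k R f \<longleftrightarrow>
     (\<exists>p. admissible n (insert 0 R) p \<and> (\<forall>t. f (test_point n i k R t) = poly p t))"

lemma gen_alg_admissible_at:
  assumes "f \<in> gen_alg G" "R \<subseteq> {1..n}" "\<And>g. g \<in> G \<Longrightarrow> admissible_at n i k R g"
  shows "admissible_at n i k R f"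
  using assms(1)
proof (induction f rule: gen_alg.induct)
  case (const c)
  have "finite (insert 0 R)"
    using assms(2) finite_subset by blast
  then show ?case
    unfolding admissible_at_def by (intro exI[of _ "[:c:]"]) (simp add: admissible_const)
next
  case (add f g)
  then obtain p q where "admissible n (insert 0 R) p" "\<forall>t. f (test_point n i k R t) = poly p t"
    and "admissible n (insert 0 R) q" "\<forall>t. g (test_point n i k R t) = poly q t"
    unfolding admissible_at_def by blast
  then show ?case
    unfolding admissible_at_def by (intro exI[of _ "p + q"]) (simp add: admissible_add)
next
  case (mult f g)
  then obtain p q where "admissible n (insert 0 R) p" "\<forall>t. f (test_point n i k R t) = poly p t"
    and "admissible n (insert 0 R) q" "\<forall>t. g (test_point n i k R t) = poly q t"
    unfolding admissible_at_def by blast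
  moreover have "insert 0 R \<subseteq> {..n}"
    using assms(2) by auto
  ultimately show ?case
    unfolding admissible_at_def by (intro exI[of _ "p * q"]) (simp add: admissible_mult)
qed (rule assms(3))

lemma admissible_at_zero:
  "(\<And>t. f (test_point n i k R t) = 0) \<Longrightarrow> admissible_at n i k R f"
  unfolding admissible_at_def admissible_def by (intro exI[of _ 0]) simp

lemma admissible_at_power:
  assumes "d \<in> weight_combinations n (insert 0 R)"
    and "\<And>S. critical (insert 0 R) S \<Longrightarrow> set_weight n S \<noteq> d"
    and "\<And>t. f (test_point n i k R t) = t ^ d"
  shows "admissible_at n i k R f"
  unfolding admissible_at_def
  using admissible_monom[OF assms(1,2)] assms(3) by (auto simp: poly_monom)

lemma onorm_admissible_at:
  assumes "R \<subseteq> {1..n}" "i \<notin> R" "k \<notin> R"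
  shows "admissible_at n i k R (\<lambda>a. onorm (a j))"
proof (cases "j \<in> R")
  case True
  define V where "V = insert 0 R"
  have V: "V \<subseteq> {..n}" "j \<in> V"
    using assms(1) True by (auto simp: V_def)
  have "(\<Sum>l\<in>V. (if l = j then 2 else 0) * weight n l) = (\<Sum>l\<in>V. if l = j then 2 * weight n j else 0)"
    by (rule sum.cong) auto
  also have "\<dots> = 2 * weight n j"
    using V finite_subset[OF V(1)] by simp
  finally have twice: "(\<Sum>l\<in>V. (if l = j then 2 else 0) * weight n l) = 2 * weight n j" .
  show ?thesis
  proof (rule admissible_at_power)
    show "2 * weight n j \<in> weight_combinations n (insert 0 R)"
      unfolding weight_combinations_def V_def[symmetric] twice[symmetric] by (rule rangeI)
    show "set_weight n S \<noteq> 2 * weight n j" if "critical (insert 0 R) S" for S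
    proof
      assume "set_weight n S = 2 * weight n j"
      with twice have "(\<Sum>l\<in>V. (if l = j then 2 else 0) * weight n l) = set_weight n S"
        by simp
      from weight_combination_eq_set_weight[OF V(1) _ this V(2)] that show False
        by (simp add: critical_def V_def of_bool_def split: if_splits)
    qed
  qed (use True assms in \<open>simp add: onorm_test_point\<close>)
qed (use assms in \<open>auto intro: admissible_at_zero simp: onorm_test_point\<close>)

lemma otr_lnp_admissible_at:
  fixes rest :: "nat list"
  assumes "CHAR('a::field) = 2" "sorted_wrt (<) (i # k # rest)" "set (i # k # rest) \<subseteq> {1..n}"
    and "sorted_wrt (<) J" "J \<noteq> i # k # rest"
  defines "R \<equiv> set rest"
  shows "admissible_at n i k R (\<lambda>a :: 'a tuple. otr (lnp J a))"
proof -
  define V where "V = insert 0 R"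
  have R: "R \<subseteq> {1..n}" "i \<notin> R" "k \<notin> R" "i \<noteq> k" and V: "V \<subseteq> {..n}"
    using assms(2,3) by (auto simp: R_def V_def)
  have "distinct J"
    using assms(4) by (simp add: strict_sorted_iff)
  consider "set J \<subseteq> insert i (insert k R)" "i \<in> set J" "k \<in> set J"
    | "set J \<subseteq> insert i (insert k R)" "i \<notin> set J \<or> k \<notin> set J"
    | j where "j \<in> set J" "j \<notin> insert i (insert k R)"
    by blast
  then show ?thesis
  proof cases
    case 1
    define S0 where "S0 = insert 0 (set J \<inter> R)"
    have S0: "S0 \<subseteq> V" "0 \<in> S0"
      by (auto simp: S0_def V_def)
    have "set_weight n S0 \<in> weight_combinations n (insert 0 R)"
      using S0 V finite_subset by (fastforce simp: V_def intro: set_weight_in_weight_combinations)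
    moreover have "set_weight n S \<noteq> set_weight n S0" if "critical (insert 0 R) S" for S
    proof
      assume "set_weight n S = set_weight n S0"
      with that have "S = S0" "critical V S"
        using set_weight_inj[OF V _ S0(1)] by (auto simp: critical_def V_def)
      with S0 have "S0 = V"
        by (auto simp: critical_def)
      have "R \<subseteq> set J"
      proof
        fix x assume "x \<in> R"
        moreover from this \<open>S0 = V\<close> have "x \<in> S0"
          by (simp add: V_def)
        moreover have "0 \<notin> R"
          using R(1) by auto
        ultimately show "x \<in> set J"
          by (auto simp: S0_def)
      qed
      with 1 have "set J = set (i # k # rest)"
        by (auto simp: R_def)
      with strict_sorted_equal[OF assms(2,4)] assms(5) show False
        by blast
    qed
    moreover have "otr (lnp J (test_point n i k R t)) = t ^ set_weight n S0" for t :: 'a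
      using otr_lnp_test_point[OF assms(1) R \<open>distinct J\<close> 1(1)] 1 by (simp add: S0_def)
    ultimately show ?thesis
      by (rule admissible_at_power)
  next
    case 2
    then show ?thesis
      using otr_lnp_test_point[OF assms(1) R \<open>distinct J\<close> 2(1)] by (auto intro: admissible_at_zero)
  next
    case 3
    then have "test_point n i k R t j = 0" for t :: 'a
      by (simp add: test_point_def)
    then show ?thesis
      by (intro admissible_at_zero) (simp add: lnp_eq_zero[OF 3(1)])
  qed
qed

text \<open>A trace of a product of at least two letters is separated from the rest of \<open>S\<^sub>n\<close> by
  degrees: along the test curve it evaluates to a critical monomial, whereas everything
  generated by the other elements of \<open>S\<^sub>n\<close> evaluates to an admissible polynomial.\<close>

lemma otr_lnp_notin_gen_alg_others:
  fixes rest :: "nat list"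
  assumes "CHAR('a::alg_closed_field) = 2" "sorted_wrt (<) (i # k # rest)"
    and "set (i # k # rest) \<subseteq> {1..n}"
  defines "s \<equiv> \<lambda>a :: 'a tuple. otr (lnp (i # k # rest) a)"
  shows "s \<notin> gen_alg (S_set n - {s})"
proof
  define R where "R = set rest"
  have R: "R \<subseteq> {1..n}" "i \<notin> R" "k \<notin> R" "i \<noteq> k"
    using assms(2,3) by (auto simp: R_def)
  assume "s \<in> gen_alg (S_set n - {s})"
  then have "admissible_at n i k R s"
  proof (rule gen_alg_admissible_at[OF _ R(1)])
    fix g assume "g \<in> S_set n - {s}"
    then have "g \<in> S_set n" "g \<noteq> s" by auto
    from this(1) show "admissible_at n i k R g"
    proof (cases rule: S_set_cases)
      case (norm j)
      then show ?thesis using onorm_admissible_at[OF R(1-3)] by simp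
    next
      case (trace J)
      with \<open>g \<noteq> s\<close> have "J \<noteq> i # k # rest" by (auto simp: s_def)
      with trace show ?thesis
        unfolding R_def using otr_lnp_admissible_at[OF assms(1-3)] by simp
    qed
  qed
  then obtain p where p: "admissible n (insert 0 R) p" "\<And>t. s (test_point n i k R t) = poly p t"
    unfolding admissible_at_def by blast
  have "s (test_point n i k R t) = poly (monom 1 (set_weight n (insert 0 R))) t" for t
    using otr_lnp_test_point[OF assms(1) R, of "i # k # rest"] assms(2)
    by (auto simp: s_def R_def strict_sorted_iff poly_monom insert_commute)
  with p(2) have "p = monom 1 (set_weight n (insert 0 R))"
    by (intro poly_eqI_infinite[OF infinite_UNIV_alg_closed_field]) simp
  moreover have "coeff p (set_weight n (insert 0 R)) = 0"
    using p(1) by (simp add: admissible_def critical_def)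
  ultimately show False
    by simp
qed

lemma S_set_element_notin_gen_alg_others:
  assumes "CHAR('a::alg_closed_field) = 2" "s \<in> (S_set n :: ('a tuple \<Rightarrow> 'a) set)"
  shows "s \<notin> gen_alg (S_set n - {s})"
  using assms(2)
proof (cases rule: S_set_cases)
  case (norm i)
  then show ?thesis using onorm_notin_gen_alg_others[OF assms(1)] by simp
next
  case (trace "is")
  then consider i where "is = [i]" | i k rest where "is = i # k # rest"
    by (cases "is" rule: remdups_adj.cases) auto
  then show ?thesis
  proof cases
    case (1 i)
    with trace show ?thesis using otr_notin_gen_alg_others[of i n] by simp
  next
    case (2 i k rest)
    with trace show ?thesis using otr_lnp_notin_gen_alg_others[OF assms(1), of i k rest n] by simp
  qed
qed

theorem theorem5p2:
  fixes n :: nat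
  assumes "n \<ge> 1"
    and "CHAR('a::alg_closed_field) = 2"
  shows "gen_alg (S_set n :: ((nat \<Rightarrow> 'a oct) \<Rightarrow> 'a) set) = T_alg n
     \<and> (\<forall>S'. S' \<subset> (S_set n :: ((nat \<Rightarrow> 'a oct) \<Rightarrow> 'a) set) \<longrightarrow> gen_alg S' \<noteq> T_alg n)"
proof (intro conjI allI impI)
  show "S_alg n = T_alg n"
    by (rule S_alg_eq_T_alg)
  fix S' :: "('a tuple \<Rightarrow> 'a) set"
  assume "S' \<subset> S_set n"
  then obtain s where s: "s \<in> S_set n" and "S' \<subseteq> S_set n - {s}"
    by blast
  then have "gen_alg S' \<subseteq> gen_alg (S_set n - {s})"
    using gen_alg_mono by blast
  moreover have "s \<in> T_alg n"
    using s S_alg_eq_T_alg gen_alg.gen by blast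
  ultimately show "gen_alg S' \<noteq> T_alg n"
    using S_set_element_notin_gen_alg_others[OF assms(2) s] by blast
qed

end
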